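(* There exists a semifilter $\mathcal{T}$ that is homeomorphic to $\mathbf{T}$, where $\mathbf{T}$ is the (unique up to homeomorphism) zero-dimensional space that is the union of a completely metrizable subspace and a countable subspace, is nowhere $\sigma$-compact, and is nowhere completely metrizable.
   Context: All spaces are separable metrizable. For a topological property $\mathcal{P}$, a space $X$ is nowhere $\mathcal{P}$ if $X$ is non-empty and no non-empty open subspace of $X$ has $\mathcal{P}$. It is known (van Douwen) that a zero-dimensional space with the three listed properties is unique up to homeomorphism; this space is denoted $\mathbf{T}$. A semifilter (on $\omega$) is a collection $\mathcal{S}\subseteq\mathcal{P}(\omega)$ such that $\varnothing\notin\mathcal{S}$, $\omega\in\mathcal{S}$, $\mathcal{S}$ is closed under finite modifications, and $\mathcal{S}$ is upward-closed; it is viewed as a subspace of $2^\omega$ via characteristic functions. *)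

theory Defs
  imports "HOL-Analysis.Analysis"
begin

definition semifilter :: "nat set set \<Rightarrow> bool" where
  "semifilter S \<longleftrightarrow>
     {} \<notin> S \<and> UNIV \<in> S \<and>
     (\<forall>A B. A \<in> S \<and> finite ((A - B) \<union> (B - A)) \<longrightarrow> B \<in> S) \<and>
     (\<forall>A B. A \<in> S \<and> A \<subseteq> B \<longrightarrow> B \<in> S)"

definition cantor_space :: "(nat \<Rightarrow> bool) topology" where
  "cantor_space = product_topology (\<lambda>_. discrete_topology (UNIV :: bool set)) UNIV"

definition char_fun :: "nat set \<Rightarrow> (nat \<Rightarrow> bool)" where
  "char_fun A = (\<lambda>n. n \<in> A)"

definition subspace_of_family :: "nat set set \<Rightarrow> (nat \<Rightarrow> bool) topology" where
  "subspace_of_family S = subtopology cantor_space (char_fun ` S)"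

definition zero_dimensional :: "'a topology \<Rightarrow> bool" where
  "zero_dimensional X \<longleftrightarrow> X dim_le 0"

definition sigma_compact_space :: "'a topology \<Rightarrow> bool" where
  "sigma_compact_space X \<longleftrightarrow>
     (\<exists>F. countable F \<and> \<Union>F = topspace X \<and> (\<forall>K\<in>F. compactin X K))"

definition nowhere :: "('a topology \<Rightarrow> bool) \<Rightarrow> 'a topology \<Rightarrow> bool" where
  "nowhere P X \<longleftrightarrow> topspace X \<noteq> {} \<and>
     (\<forall>U. openin X U \<and> U \<noteq> {} \<longrightarrow> \<not> P (subtopology X U))"

definition T_like :: "'a topology \<Rightarrow> bool" where
  "T_like X \<longleftrightarrow>
     zero_dimensional X \<and>
     (\<exists>C D. C \<union> D = topspace X \<and> completely_metrizable_space (subtopology X C) \<and> countable D) \<and>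
     nowhere sigma_compact_space X \<and>
     nowhere completely_metrizable_space X"

end

theory Submission
  imports Defs
begin

text \<open>
  The semifilter consists of the sets that meet the even numbers infinitely often or contain
  almost all odd numbers. As a subspace of \<open>2\<^sup>\<omega>\<close> it is zero-dimensional, and it is the union of
  the \<open>G\<^sub>\<delta>\<close> set of sequences with infinitely many even ones (completely metrizable) and a
  countable set of finite modifications of the indicator of the odd numbers.

  Fix a cylinder around a point of the space. Making all later even coordinates vanish cuts out a
  countable set without isolated points; it would be \<open>G\<^sub>\<delta>\<close>, hence completely metrizable, if the
  open piece were, contradicting the Baire category theorem. Making instead all later odd
  coordinates vanish cuts out a completely metrizable set; if the open piece were a countable
  union of compact sets, by Baire one of them would contain a relative cylinder, and being
  closed it would contain the limit obtained by switching off all coordinates beyond the stem,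
  which has finitely many even ones and infinitely many odd zeros and so lies outside the space.
\<close>

section \<open>Consequences of the Baire category theorem\<close>

lemma Baire_closed_cover_interior:
  assumes X: "completely_metrizable_space X" and ne: "topspace X \<noteq> {}"
    and "countable \<G>" and cover: "\<Union>\<G> = topspace X"
    and closed: "\<And>T. T \<in> \<G> \<Longrightarrow> closedin X T"
  obtains T where "T \<in> \<G>" "X interior_of T \<noteq> {}"
proof -
  have "\<not> (\<forall>T\<in>\<G>. X interior_of T = {})"
  proof
    assume "\<forall>T\<in>\<G>. X interior_of T = {}"
    then have "X interior_of \<Union>\<G> = {}"
      using Baire_category_alt[of X \<G>] X \<open>countable \<G>\<close> closed by blast
    then show False
      using cover ne by simp
  qed
  then show thesis
    using that by blast
qed

lemma countable_completely_metrizable_isolated_point: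
  assumes X: "completely_metrizable_space X" and "countable (topspace X)" "topspace X \<noteq> {}"
  obtains x where "x \<in> topspace X" "openin X {x}"
proof -
  have "Hausdorff_space X"
    by (simp add: X completely_metrizable_imp_metrizable_space metrizable_imp_Hausdorff_space)
  obtain T where T: "T \<in> (\<lambda>x. {x}) ` topspace X" "X interior_of T \<noteq> {}"
  proof (rule Baire_closed_cover_interior[OF X \<open>topspace X \<noteq> {}\<close>])
    show "countable ((\<lambda>x. {x}) ` topspace X)"
      using \<open>countable (topspace X)\<close> by blast
  qed (use \<open>Hausdorff_space X\<close> in \<open>auto simp: closedin_Hausdorff_singleton\<close>)
  then obtain x where "x \<in> topspace X" "T = {x}" by blast
  moreover have "X interior_of {x} = {x}"
    using T \<open>T = {x}\<close> interior_of_subset[of X "{x}"] by blast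
  ultimately show thesis
    using that by (metis openin_interior_of)
qed

lemma nowhere_subtopologyI:
  assumes "S \<noteq> {}" "S \<subseteq> topspace X"
    and "\<And>W. openin X W \<Longrightarrow> W \<inter> S \<noteq> {} \<Longrightarrow> \<not> P (subtopology X (W \<inter> S))"
  shows "nowhere P (subtopology X S)"
  unfolding nowhere_def
proof (intro conjI allI impI)
  show "topspace (subtopology X S) \<noteq> {}"
    using assms(1,2) by (simp add: Int_absorb1)
  fix U
  assume "openin (subtopology X S) U \<and> U \<noteq> {}"
  then obtain W where "openin X W" "U = W \<inter> S" "W \<inter> S \<noteq> {}"
    by (auto simp: openin_subtopology)
  moreover have "subtopology (subtopology X S) (W \<inter> S) = subtopology X (W \<inter> S)"
    by (simp add: subtopology_subtopology Int_commute)
  ultimately show "\<not> P (subtopology (subtopology X S) U)"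
    using assms(3) by simp
qed

section \<open>Cantor space\<close>

lemma topspace_cantor_space [simp]: "topspace cantor_space = UNIV"
  by (simp add: cantor_space_def PiE_UNIV_domain)

lemma completely_metrizable_cantor_space: "completely_metrizable_space cantor_space"
  by (simp add: cantor_space_def completely_metrizable_space_product_topology
      completely_metrizable_space_discrete_topology)

lemma metrizable_cantor_space: "metrizable_space cantor_space"
  by (simp add: completely_metrizable_cantor_space completely_metrizable_imp_metrizable_space)

lemma Hausdorff_cantor_space: "Hausdorff_space cantor_space"
  by (simp add: metrizable_cantor_space metrizable_imp_Hausdorff_space)

lemma cantor_agree_on_eq_PiE:
  "{f. \<forall>i\<in>I. f i = g i} = (\<Pi>\<^sub>E i\<in>UNIV. if i \<in> I then {g i} else UNIV)"
  by (auto simp: PiE_UNIV_domain split: if_splits)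

lemma closedin_cantor_agree_on: "closedin cantor_space {f. \<forall>i\<in>I. f i = g i}"
  unfolding cantor_agree_on_eq_PiE cantor_space_def closedin_product_topology by simp

lemma openin_cantor_agree_on:
  assumes "finite I"
  shows "openin cantor_space {f. \<forall>i\<in>I. f i = g i}"
proof -
  have "{i. (if i \<in> I then {g i} else UNIV) \<noteq> UNIV} \<subseteq> I" by auto
  then show ?thesis
    unfolding cantor_agree_on_eq_PiE cantor_space_def openin_PiE_gen
    using assms finite_subset by auto
qed

definition cylinder :: "(nat \<Rightarrow> bool) \<Rightarrow> nat \<Rightarrow> (nat \<Rightarrow> bool) set" where
  "cylinder p n = {f. \<forall>i<n. f i = p i}"

lemma self_in_cylinder [simp]: "p \<in> cylinder p n"
  by (simp add: cylinder_def)

lemma cylinder_eq_agree_on: "cylinder p n = {f. \<forall>i\<in>{..<n}. f i = p i}"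
  by (auto simp: cylinder_def)

lemma closedin_cylinder: "closedin cantor_space (cylinder p n)"
  unfolding cylinder_eq_agree_on by (rule closedin_cantor_agree_on)

lemma openin_cylinder: "openin cantor_space (cylinder p n)"
  unfolding cylinder_eq_agree_on by (simp add: openin_cantor_agree_on)

lemma openin_cantor_contains_cylinder:
  assumes "openin cantor_space W" "p \<in> W"
  obtains n where "cylinder p n \<subseteq> W"
proof -
  have "\<exists>U. finite {i \<in> UNIV. U i \<noteq> topspace (discrete_topology (UNIV :: bool set))} \<and>
      (\<forall>i\<in>UNIV. openin (discrete_topology UNIV) (U i)) \<and> p \<in> Pi\<^sub>E UNIV U \<and> Pi\<^sub>E UNIV U \<subseteq> W"
    using assms unfolding cantor_space_def openin_product_topology_alt by blast
  then obtain U where U: "finite {i. U i \<noteq> UNIV}" "p \<in> Pi\<^sub>E UNIV U" "Pi\<^sub>E UNIV U \<subseteq> W"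
    by auto
  obtain n where "{i. U i \<noteq> UNIV} \<subseteq> {..<n}"
    using finite_nat_bounded[OF U(1)] by blast
  then have n: "U i = UNIV" if "\<not> i < n" for i
    using that by blast
  have "cylinder p n \<subseteq> Pi\<^sub>E UNIV U"
  proof
    fix f
    assume "f \<in> cylinder p n"
    then have "f i \<in> U i" for i
      using U(2) n by (cases "i < n") (auto simp: cylinder_def PiE_UNIV_domain)
    then show "f \<in> Pi\<^sub>E UNIV U"
      by (simp add: PiE_UNIV_domain)
  qed
  then show thesis
    using that U(3) by blast
qed

lemma openin_subtopology_cantor_contains_cylinder:
  assumes "openin (subtopology cantor_space Y) U" "p \<in> U"
  obtains n where "cylinder p n \<inter> Y \<subseteq> U"
proof -
  obtain W where W: "openin cantor_space W" "U = W \<inter> Y"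
    using assms(1) by (auto simp: openin_subtopology)
  moreover obtain n where "cylinder p n \<subseteq> W"
    using openin_cantor_contains_cylinder[OF W(1)] W(2) assms(2) by auto
  ultimately show thesis
    using that by auto
qed

lemma in_cantor_closure_ofI:
  assumes "\<And>n. cylinder r n \<inter> K \<noteq> {}"
  shows "r \<in> cantor_space closure_of K"
proof -
  have "\<exists>y. y \<in> K \<and> y \<in> V" if V: "openin cantor_space V" "r \<in> V" for V
  proof -
    obtain n where "cylinder r n \<subseteq> V"
      using openin_cantor_contains_cylinder[OF V] by blast
    then show ?thesis
      using assms[of n] by blast
  qed
  then show ?thesis
    by (simp add: in_closure_of)
qed

lemma cantor_space_dim_le_0: "cantor_space dim_le 0"
  unfolding dimension_le_0_neighbourhood_base_of_clopen neighbourhood_base_of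
proof (intro allI impI)
  fix W p
  assume "openin cantor_space W \<and> p \<in> W"
  then obtain n where "cylinder p n \<subseteq> W"
    using openin_cantor_contains_cylinder by auto
  then show "\<exists>U V. openin cantor_space U \<and> (closedin cantor_space V \<and> openin cantor_space V) \<and>
      p \<in> U \<and> U \<subseteq> V \<and> V \<subseteq> W"
    by (intro exI[of _ "cylinder p n"] conjI openin_cylinder closedin_cylinder self_in_cylinder order_refl)
qed

definition splice_at :: "(nat \<Rightarrow> bool) \<Rightarrow> nat \<Rightarrow> (nat \<Rightarrow> bool) \<Rightarrow> nat \<Rightarrow> bool" where
  "splice_at p n g i = (if i < n then p i else g i)"

lemma splice_at_in_cylinder: "m \<le> n \<Longrightarrow> splice_at p n g \<in> cylinder p m"
  by (simp add: splice_at_def cylinder_def)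

lemma finite_splice_at_iff: "finite {i. Q i (splice_at p n g i)} \<longleftrightarrow> finite {i. Q i (g i)}"
proof -
  have "{i. Q i (splice_at p n g i)} \<subseteq> {i. Q i (g i)} \<union> {..<n}"
       "{i. Q i (g i)} \<subseteq> {i. Q i (splice_at p n g i)} \<union> {..<n}"
    by (auto simp: splice_at_def)
  then show ?thesis
    by (meson finite_Un finite_lessThan finite_subset)
qed

lemma gdelta_in_cantor_infinitely_often:
  "gdelta_in cantor_space {f. infinite {i. Q i \<and> f i}}"
proof -
  have eq: "{f. infinite {i. Q i \<and> f i}} = (\<Inter>m. \<Union>i\<in>{i. m \<le> i \<and> Q i}. {f. f i})"
    by (auto simp: infinite_nat_iff_unbounded_le)
  have "openin cantor_space {f. f i}" for i
    using openin_cantor_agree_on[of "{i}" "\<lambda>_. True"] by simp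
  then have tails: "openin cantor_space (\<Union>i\<in>{i. m \<le> i \<and> Q i}. {f. f i})" for m
    by (intro openin_Union) auto
  show ?thesis
    unfolding eq
  proof (rule gdelta_in_Inter)
    fix S
    assume "S \<in> range (\<lambda>m. \<Union>i\<in>{i. m \<le> i \<and> Q i}. {f. f i})"
    then show "gdelta_in cantor_space S"
      using tails open_imp_gdelta_in by blast
  qed auto
qed

section \<open>The semifilter\<close>

lemma semifilter_infinite_meet_or_cofinite:
  assumes "infinite D"
  shows "semifilter {A. infinite (A \<inter> E) \<or> finite (D - A)}"
  unfolding semifilter_def mem_Collect_eq
proof (intro conjI allI impI)
  fix A B :: "nat set"
  assume "(infinite (A \<inter> E) \<or> finite (D - A)) \<and> finite ((A - B) \<union> (B - A))"
  then have A: "infinite (A \<inter> E) \<or> finite (D - A)" and fin: "finite (A - B)" "finite (B - A)"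
    by auto
  have sub: "A \<inter> E \<subseteq> (B \<inter> E) \<union> (A - B)" "D - B \<subseteq> (D - A) \<union> (A - B)"
    by auto
  have "finite (B \<inter> E) \<Longrightarrow> finite (A \<inter> E)" "finite (D - A) \<Longrightarrow> finite (D - B)"
    using finite_subset[OF sub(1)] finite_subset[OF sub(2)] fin by simp_all
  then show "infinite (B \<inter> E) \<or> finite (D - B)"
    using A by blast
next
  fix A B :: "nat set"
  assume "(infinite (A \<inter> E) \<or> finite (D - A)) \<and> A \<subseteq> B"
  then have A: "infinite (A \<inter> E) \<or> finite (D - A)" and "A \<subseteq> B"
    by auto
  then have mono: "A \<inter> E \<subseteq> B \<inter> E" "D - B \<subseteq> D - A"
    by auto
  have "finite (B \<inter> E) \<Longrightarrow> finite (A \<inter> E)" "finite (D - A) \<Longrightarrow> finite (D - B)"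
    using finite_subset[OF mono(1)] finite_subset[OF mono(2)] by simp_all
  then show "infinite (B \<inter> E) \<or> finite (D - B)"
    using A by blast
qed (use assms in auto)

lemma char_fun_image_Collect: "char_fun ` {A. P A} = {f. P (Collect f)}"
proof (intro set_eqI iffI)
  fix f :: "nat \<Rightarrow> bool"
  assume "f \<in> {f. P (Collect f)}"
  moreover have "f = char_fun (Collect f)"
    by (simp add: char_fun_def)
  ultimately show "f \<in> char_fun ` {A. P A}"
    by blast
qed (auto simp: char_fun_def)

lemma infinite_odd_nat: "infinite {i::nat. odd i}"
  unfolding infinite_nat_iff_unbounded_le
proof
  fix m :: nat
  show "\<exists>n\<ge>m. n \<in> {i. odd i}"
    by (rule exI[of _ "2 * m + 1"]) simp
qed

lemma infinite_even_nat: "infinite {i::nat. even i}"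
  unfolding infinite_nat_iff_unbounded_le
proof
  fix m :: nat
  show "\<exists>n\<ge>m. n \<in> {i. even i}"
    by (rule exI[of _ "2 * m"]) simp
qed

definition T_semifilter :: "nat set set" where
  "T_semifilter = {A. infinite (A \<inter> {i. even i}) \<or> finite ({i. odd i} - A)}"

definition T_points :: "(nat \<Rightarrow> bool) set" where
  "T_points = char_fun ` T_semifilter"

lemma semifilter_T_semifilter: "semifilter T_semifilter"
  unfolding T_semifilter_def by (rule semifilter_infinite_meet_or_cofinite[OF infinite_odd_nat])

lemma mem_T_points:
  "f \<in> T_points \<longleftrightarrow> infinite {i. even i \<and> f i} \<or> finite {i. odd i \<and> \<not> f i}"
proof -
  have "Collect f \<inter> {i. even i} = {i. even i \<and> f i}" "{i. odd i} - Collect f = {i. odd i \<and> \<not> f i}"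
    by auto
  then show ?thesis
    by (simp add: T_points_def T_semifilter_def char_fun_image_Collect)
qed

lemma countable_finite_deviation: "countable {f :: nat \<Rightarrow> bool. finite {i. f i \<noteq> g i}}"
proof -
  have "{f. finite {i. f i \<noteq> g i}} = (\<lambda>d i. d i \<noteq> g i) ` {d. finite {i. d i \<noteq> False}}"
  proof (intro set_eqI iffI)
    fix f :: "nat \<Rightarrow> bool"
    assume "f \<in> {f. finite {i. f i \<noteq> g i}}"
    then show "f \<in> (\<lambda>d i. d i \<noteq> g i) ` {d. finite {i. d i \<noteq> False}}"
      by (intro image_eqI[of _ _ "\<lambda>i. f i \<noteq> g i"]) auto
  next
    fix f :: "nat \<Rightarrow> bool"
    assume "f \<in> (\<lambda>d i. d i \<noteq> g i) ` {d. finite {i. d i \<noteq> False}}"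
    then obtain d where "finite {i. d i}" "f = (\<lambda>i. d i \<noteq> g i)"
      by auto
    moreover have "{i. (d i \<noteq> g i) \<noteq> g i} = {i. d i}"
      by auto
    ultimately show "f \<in> {f. finite {i. f i \<noteq> g i}}"
      by simp
  qed
  moreover have "countable {d :: nat \<Rightarrow> bool. finite {i. d i \<noteq> False}}"
    using countable_nat_product_event_const[of False UNIV] by simp
  ultimately show ?thesis
    by simp
qed

lemma even_infinite_subset_T_points: "{f. infinite {i. even i \<and> f i}} \<subseteq> T_points"
  by (auto simp: mem_T_points)

lemma countable_T_points_even_finite: "countable (T_points - {f. infinite {i. even i \<and> f i}})"
proof (rule countable_subset[OF _ countable_finite_deviation])
  show "T_points - {f. infinite {i. even i \<and> f i}} \<subseteq> {f. finite {i. f i \<noteq> odd i}}"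
  proof
    fix f
    assume "f \<in> T_points - {f. infinite {i. even i \<and> f i}}"
    then have "finite ({i. even i \<and> f i} \<union> {i. odd i \<and> \<not> f i})"
      by (auto simp: mem_T_points)
    moreover have "{i. f i \<noteq> odd i} = {i. even i \<and> f i} \<union> {i. odd i \<and> \<not> f i}"
      by auto
    ultimately show "f \<in> {f. finite {i. f i \<noteq> odd i}}"
      by simp
  qed
qed

lemma T_points_nonempty: "T_points \<noteq> {}"
proof -
  have "(\<lambda>_. True) \<in> T_points"
    by (simp add: mem_T_points)
  then show ?thesis
    by blast
qed

lemma T_points_completely_metrizable_Un_countable:
  "\<exists>C D. C \<union> D = topspace (subtopology cantor_space T_points) \<and>
     completely_metrizable_space (subtopology (subtopology cantor_space T_points) C) \<and> countable D"
proof (intro exI conjI)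
  let ?C = "{f. infinite {i. even i \<and> f i}}"
  show "?C \<union> (T_points - ?C) = topspace (subtopology cantor_space T_points)"
    using even_infinite_subset_T_points by auto
  have "subtopology (subtopology cantor_space T_points) ?C = subtopology cantor_space ?C"
    using even_infinite_subset_T_points by (simp add: subtopology_subtopology Int_absorb1)
  then show "completely_metrizable_space (subtopology (subtopology cantor_space T_points) ?C)"
    using completely_metrizable_space_gdelta_in[OF completely_metrizable_cantor_space
        gdelta_in_cantor_infinitely_often] by simp
  show "countable (T_points - ?C)"
    by (rule countable_T_points_even_finite)
qed

section \<open>Nowhere complete metrizability\<close>

definition even_tail_null :: "(nat \<Rightarrow> bool) \<Rightarrow> nat \<Rightarrow> (nat \<Rightarrow> bool) set" where
  "even_tail_null p n =
     {f \<in> cylinder p n. (\<forall>i. even i \<and> n \<le> i \<longrightarrow> \<not> f i) \<and> finite {i. odd i \<and> \<not> f i}}"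

lemma finite_even_if_even_tail_null:
  fixes f :: "nat \<Rightarrow> bool"
  assumes "\<forall>i. even i \<and> n \<le> i \<longrightarrow> \<not> f i"
  shows "finite {i. even i \<and> f i}"
proof (rule finite_subset)
  show "{i. even i \<and> f i} \<subseteq> {..<n}"
    using assms by (auto simp: not_less[symmetric])
qed simp

lemma even_tail_null_eq:
  "even_tail_null p n = T_points \<inter> (cylinder p n \<inter> {f. \<forall>i\<in>{i. even i \<and> n \<le> i}. f i = False})"
  by (auto simp: even_tail_null_def mem_T_points dest: finite_even_if_even_tail_null)

lemma countable_even_tail_null: "countable (even_tail_null p n)"
  by (rule countable_subset[OF _ countable_T_points_even_finite])
     (use finite_even_if_even_tail_null in \<open>auto simp: even_tail_null_eq\<close>)

lemma splice_at_odd_in_even_tail_null: "splice_at p n odd \<in> even_tail_null p n"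
  using finite_splice_at_iff[of "\<lambda>i x. odd i \<and> \<not> x" p n odd]
  by (auto simp: even_tail_null_def splice_at_in_cylinder) (auto simp: splice_at_def)

lemma even_tail_null_no_isolated:
  assumes q: "q \<in> even_tail_null p n"
  obtains f where "f \<in> cylinder q N \<inter> even_tail_null p n" "f \<noteq> q"
proof -
  have fin: "finite {i. odd i \<and> \<not> q i}"
    using q by (simp add: even_tail_null_def)
  have "{i. odd i} \<subseteq> {i. odd i \<and> q i} \<union> {i. odd i \<and> \<not> q i}"
    by auto
  then have "infinite {i. odd i \<and> q i}"
    using infinite_odd_nat fin finite_subset by auto
  then obtain m where m: "max N n \<le> m" "odd m" "q m"
    unfolding infinite_nat_iff_unbounded_le by blast
  have "{i. odd i \<and> \<not> (q(m := False)) i} \<subseteq> insert m {i. odd i \<and> \<not> q i}"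
    by auto
  then have "finite {i. odd i \<and> \<not> (q(m := False)) i}"
    using fin by (rule finite_subset[OF _ finite_insert[THEN iffD2]])
  then have "q(m := False) \<in> even_tail_null p n"
    using q m by (auto simp: even_tail_null_def cylinder_def)
  moreover have "q(m := False) \<in> cylinder q N"
    using m by (simp add: cylinder_def)
  moreover have "q(m := False) \<noteq> q"
    using m by (metis fun_upd_same)
  ultimately show thesis
    using that by blast
qed

lemma open_T_points_not_completely_metrizable:
  assumes W: "openin cantor_space W" and "W \<inter> T_points \<noteq> {}"
  shows "\<not> completely_metrizable_space (subtopology cantor_space (W \<inter> T_points))"
proof
  assume "completely_metrizable_space (subtopology cantor_space (W \<inter> T_points))"
  then have "gdelta_in cantor_space (W \<inter> T_points)"
    using completely_metrizable_space_imp_gdelta_in[OF metrizable_cantor_space] by simp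
  obtain p where p: "p \<in> W \<inter> T_points"
    using assms(2) by blast
  obtain n where n: "cylinder p n \<subseteq> W"
    using openin_cantor_contains_cylinder[OF W] p by auto
  have "even_tail_null p n =
      (W \<inter> T_points) \<inter> (cylinder p n \<inter> {f. \<forall>i\<in>{i. even i \<and> n \<le> i}. f i = False})"
    using n by (auto simp: even_tail_null_eq)
  moreover have "closedin cantor_space (cylinder p n \<inter> {f. \<forall>i\<in>{i. even i \<and> n \<le> i}. f i = False})"
    by (intro closedin_Int closedin_cylinder closedin_cantor_agree_on)
  ultimately have "gdelta_in cantor_space (even_tail_null p n)"
    using \<open>gdelta_in cantor_space (W \<inter> T_points)\<close>
    by (simp add: closed_imp_gdelta_in gdelta_in_Int metrizable_cantor_space)
  then have cm: "completely_metrizable_space (subtopology cantor_space (even_tail_null p n))"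
    by (rule completely_metrizable_space_gdelta_in[OF completely_metrizable_cantor_space])
  obtain q where q: "q \<in> even_tail_null p n" "openin (subtopology cantor_space (even_tail_null p n)) {q}"
  proof (rule countable_completely_metrizable_isolated_point[OF cm])
    show "countable (topspace (subtopology cantor_space (even_tail_null p n)))"
      using countable_even_tail_null by simp
    show "topspace (subtopology cantor_space (even_tail_null p n)) \<noteq> {}"
      using splice_at_odd_in_even_tail_null by auto
  qed (use that in simp)
  obtain N where "cylinder q N \<inter> even_tail_null p n \<subseteq> {q}"
    using openin_subtopology_cantor_contains_cylinder[OF q(2)] by auto
  then show False
    using even_tail_null_no_isolated[OF q(1), of N] by auto
qed

section \<open>Nowhere \<open>\<sigma>\<close>-compactness\<close>

definition odd_tail_null :: "(nat \<Rightarrow> bool) \<Rightarrow> nat \<Rightarrow> (nat \<Rightarrow> bool) set" where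
  "odd_tail_null p n =
     {f \<in> cylinder p n. (\<forall>i. odd i \<and> n \<le> i \<longrightarrow> \<not> f i) \<and> infinite {i. even i \<and> f i}}"

lemma gdelta_in_odd_tail_null: "gdelta_in cantor_space (odd_tail_null p n)"
proof -
  have "odd_tail_null p n =
      (cylinder p n \<inter> {f. \<forall>i\<in>{i. odd i \<and> n \<le> i}. f i = False}) \<inter> {f. infinite {i. even i \<and> f i}}"
    by (auto simp: odd_tail_null_def)
  moreover have "closedin cantor_space (cylinder p n \<inter> {f. \<forall>i\<in>{i. odd i \<and> n \<le> i}. f i = False})"
    by (intro closedin_Int closedin_cylinder closedin_cantor_agree_on)
  ultimately show ?thesis
    by (simp add: closed_imp_gdelta_in gdelta_in_Int gdelta_in_cantor_infinitely_often
        metrizable_cantor_space)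
qed

lemma odd_tail_null_subset_T_points: "odd_tail_null p n \<subseteq> T_points"
  by (auto simp: odd_tail_null_def mem_T_points)

lemma splice_at_even_in_odd_tail_null: "splice_at p n even \<in> odd_tail_null p n"
  using infinite_even_nat finite_splice_at_iff[of "\<lambda>i x. even i \<and> x" p n even]
  by (auto simp: odd_tail_null_def splice_at_in_cylinder) (auto simp: splice_at_def)

lemma splice_at_False_notin_T_points: "splice_at q m (\<lambda>_. False) \<notin> T_points"
  using infinite_odd_nat finite_splice_at_iff[of "\<lambda>i x. even i \<and> x" q m "\<lambda>_. False"]
    finite_splice_at_iff[of "\<lambda>i x. odd i \<and> \<not> x" q m "\<lambda>_. False"]
  by (simp add: mem_T_points)

lemma splice_at_False_in_closure_of_odd_tail_null:
  assumes q: "q \<in> odd_tail_null p n"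
  shows "splice_at q (max N n) (\<lambda>_. False) \<in> cantor_space closure_of (cylinder q N \<inter> odd_tail_null p n)"
proof (rule in_cantor_closure_ofI)
  fix M
  define r where "r = splice_at q (max N n) (\<lambda>_. False)"
  define g where "g = splice_at r (max M (max N n)) even"
  have low: "g i = q i" if "i < max N n" for i
    using that by (auto simp: g_def r_def splice_at_def)
  have high: "g i \<longleftrightarrow> max M (max N n) \<le> i \<and> even i" if "max N n \<le> i" for i
    using that by (auto simp: g_def r_def splice_at_def max_def)
  have "g \<in> cylinder r M"
    by (simp add: g_def splice_at_in_cylinder)
  moreover have "g \<in> cylinder q N"
    using low by (simp add: cylinder_def)
  moreover have "g \<in> odd_tail_null p n"
    unfolding odd_tail_null_def
  proof (intro CollectI conjI allI impI)
    show "g \<in> cylinder p n"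
      using q low by (simp add: odd_tail_null_def cylinder_def)
    show "\<not> g i" if "odd i \<and> n \<le> i" for i
      using q that low[of i] high[of i] by (cases "i < max N n") (auto simp: odd_tail_null_def)
    show "infinite {i. even i \<and> g i}"
      using infinite_even_nat finite_splice_at_iff[of "\<lambda>i x. even i \<and> x" r "max M (max N n)" even]
      by (simp add: g_def)
  qed
  ultimately show "cylinder r M \<inter> (cylinder q N \<inter> odd_tail_null p n) \<noteq> {}"
    by blast
qed

lemma open_T_points_not_sigma_compact:
  assumes W: "openin cantor_space W" and "W \<inter> T_points \<noteq> {}"
  shows "\<not> sigma_compact_space (subtopology cantor_space (W \<inter> T_points))"
proof
  assume "sigma_compact_space (subtopology cantor_space (W \<inter> T_points))"
  then obtain \<F> where \<F>: "countable \<F>" "\<Union>\<F> = W \<inter> T_points"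
    and compact: "\<And>K. K \<in> \<F> \<Longrightarrow> compactin cantor_space K"
    unfolding sigma_compact_space_def by (auto simp: compactin_subtopology)
  have closed: "closedin cantor_space K" if "K \<in> \<F>" for K
    using compact[OF that] compactin_imp_closedin[OF Hausdorff_cantor_space] by blast
  obtain p where p: "p \<in> W \<inter> T_points"
    using assms(2) by blast
  obtain n where n: "cylinder p n \<subseteq> W"
    using openin_cantor_contains_cylinder[OF W] p by auto
  let ?P = "odd_tail_null p n"
  have P_cover: "?P \<subseteq> \<Union>\<F>"
    using n odd_tail_null_subset_T_points \<F>(2) by (auto simp: odd_tail_null_def)
  have cm: "completely_metrizable_space (subtopology cantor_space ?P)"
    by (rule completely_metrizable_space_gdelta_in[OF completely_metrizable_cantor_space
          gdelta_in_odd_tail_null])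
  obtain K where K: "K \<in> \<F>" "subtopology cantor_space ?P interior_of (?P \<inter> K) \<noteq> {}"
  proof (rule Baire_closed_cover_interior[OF cm, of "(\<lambda>K. ?P \<inter> K) ` \<F>"])
    show "topspace (subtopology cantor_space ?P) \<noteq> {}"
      using splice_at_even_in_odd_tail_null by auto
    show "countable ((\<lambda>K. ?P \<inter> K) ` \<F>)"
      using \<F>(1) by blast
    show "\<Union> ((\<lambda>K. ?P \<inter> K) ` \<F>) = topspace (subtopology cantor_space ?P)"
      using P_cover by auto
    show "closedin (subtopology cantor_space ?P) T" if "T \<in> (\<lambda>K. ?P \<inter> K) ` \<F>" for T
      using that closed closedin_subtopology_Int_closed by auto
  qed (use that in auto)
  then obtain q where q: "q \<in> subtopology cantor_space ?P interior_of (?P \<inter> K)"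
    by blast
  have int_sub: "subtopology cantor_space ?P interior_of (?P \<inter> K) \<subseteq> ?P \<inter> K"
    by (rule interior_of_subset)
  obtain N where "cylinder q N \<inter> ?P \<subseteq> subtopology cantor_space ?P interior_of (?P \<inter> K)"
    using openin_subtopology_cantor_contains_cylinder[OF openin_interior_of q] by auto
  then have "cylinder q N \<inter> ?P \<subseteq> K"
    using int_sub by auto
  moreover have "q \<in> ?P"
    using q int_sub by auto
  ultimately have "splice_at q (max N n) (\<lambda>_. False) \<in> cantor_space closure_of K"
    using splice_at_False_in_closure_of_odd_tail_null closure_of_mono by fast
  then have "splice_at q (max N n) (\<lambda>_. False) \<in> \<Union>\<F>"
    using closure_of_closedin[OF closed[OF K(1)]] K(1) by auto
  then show False
    using splice_at_False_notin_T_points \<F>(2) by auto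
qed

theorem proposition5p4:
  shows "\<exists>S. semifilter S \<and> T_like (subspace_of_family S)"
proof (intro exI conjI)
  show "semifilter T_semifilter"
    by (rule semifilter_T_semifilter)
  have X: "subspace_of_family T_semifilter = subtopology cantor_space T_points"
    by (simp add: subspace_of_family_def T_points_def)
  show "T_like (subspace_of_family T_semifilter)"
    unfolding T_like_def zero_dimensional_def X
  proof (intro conjI)
    show "subtopology cantor_space T_points dim_le 0"
      by (rule dimension_le_subtopology[OF cantor_space_dim_le_0])
    show "nowhere sigma_compact_space (subtopology cantor_space T_points)"
      by (rule nowhere_subtopologyI[OF T_points_nonempty])
         (simp_all add: open_T_points_not_sigma_compact)
    show "nowhere completely_metrizable_space (subtopology cantor_space T_points)"
      by (rule nowhere_subtopologyI[OF T_points_nonempty])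
         (simp_all add: open_T_points_not_completely_metrizable)
  qed (rule T_points_completely_metrizable_Un_countable)
qed

end
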